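(* Let $m>2$ be an odd integer, $n\ge 1$ an integer, and let $M_{2mn}=\langle a,b : a^m=b^{2n}=1,\ bab^{-1}=a^{-1}\rangle$ be the metacyclic group of order $2mn$. Let $\Gamma_{M_{2mn}}$ be its non-commuting graph. Then the spectrum of the distance matrix $D(\Gamma_{M_{2mn}})$ (eigenvalues counted with multiplicity, multiplicities being added if two of the listed values coincide) consists of: (a) $-2$ with multiplicity $2mn-(m+n)-1$; (b) $n-2$ with multiplicity $m-1$; (c) $\frac{-(4+n-3mn)+n\sqrt{5m^2-10m+9}}{2}$ and $\frac{-(4+n-3mn)-n\sqrt{5m^2-10m+9}}{2}$, each with multiplicity $1$.
   Context: For a finite non-abelian group $G$ with centre $Z(G)$, the non-commuting graph $\Gamma_G$ is the simple undirected graph with vertex set $G\setminus Z(G)$, in which two distinct vertices $u,v$ are adjacent if and only if $uv\ne vu$. For a connected graph $H$, $d_{uv}$ denotes the length of a shortest path between vertices $u$ and $v$, and the distance matrix $D(H)$ is the matrix whose $(u,v)$-entry is $d_{uv}$. *)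

theory Defs
  imports "HOL-Algebra.Algebra" "Jordan_Normal_Form.Char_Poly"
begin

definition grp_centre :: "('a, 'b) monoid_scheme \<Rightarrow> 'a set" where
  "grp_centre G = {z \<in> carrier G. \<forall>x \<in> carrier G. z \<otimes>\<^bsub>G\<^esub> x = x \<otimes>\<^bsub>G\<^esub> z}"

definition nc_vertices :: "('a, 'b) monoid_scheme \<Rightarrow> 'a set" where
  "nc_vertices G = carrier G - grp_centre G"

definition nc_adj :: "('a, 'b) monoid_scheme \<Rightarrow> 'a \<Rightarrow> 'a \<Rightarrow> bool" where
  "nc_adj G u v \<longleftrightarrow> u \<in> nc_vertices G \<and> v \<in> nc_vertices G \<and> u \<noteq> v
     \<and> u \<otimes>\<^bsub>G\<^esub> v \<noteq> v \<otimes>\<^bsub>G\<^esub> u"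

definition nc_walk :: "('a, 'b) monoid_scheme \<Rightarrow> 'a list \<Rightarrow> 'a \<Rightarrow> 'a \<Rightarrow> bool" where
  "nc_walk G p u v \<longleftrightarrow> p \<noteq> [] \<and> hd p = u \<and> last p = v \<and> set p \<subseteq> nc_vertices G
     \<and> (\<forall>i < length p - 1. nc_adj G (p ! i) (p ! Suc i))"

text \<open>Distance: length (number of edges) of a shortest walk (equivalently path) from u to v.\<close>
definition nc_dist :: "('a, 'b) monoid_scheme \<Rightarrow> 'a \<Rightarrow> 'a \<Rightarrow> nat" where
  "nc_dist G u v = (LEAST k. \<exists>p. nc_walk G p u v \<and> length p = Suc k)"

definition nc_distance_matrix :: "('a, 'b) monoid_scheme \<Rightarrow> (nat \<Rightarrow> 'a) \<Rightarrow> real mat" where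
  "nc_distance_matrix G f =
     mat (card (nc_vertices G)) (card (nc_vertices G)) (\<lambda>(i, j). real (nc_dist G (f i) (f j)))"

end

(*
  Every element of M_2mn is a^x b^y for exactly one x < m and y < 2n (the words a^x b^y
  exhaust the group, and there are 2mn of them), and a^x b^y commutes with a^x' b^y' iff
  x + (-1)^y x' = x' + (-1)^y' x (mod m). Since m is odd this makes the centre
  {b^y : y even}, and splits the non-central elements into m + 1 classes: C_0 of the
  a^x b^y with x <> 0, y even (size (m-1)n), and C_(x+1) of the a^x b^y with y odd (size n).
  Two non-central elements commute iff they lie in the same class, so the non-commuting graph
  is complete multipartite: distance 1 across classes and 2 inside a class.

  For such a distance matrix D, every vertex i other than the representative r of its class
  gives D(e_i - e_r) = -2 (e_i - e_r); splitting these off leaves the quotient matrix of the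
  class sizes. Its m classes of equal size n split off n - 2 in the same way, leaving a
  2 x 2 matrix with trace 3mn - n - 4 and discriminant n^2 (5m^2 - 10m + 9).
*)
theory Submission
  imports Defs
begin

section \<open>Characteristic polynomials by deflation\<close>

lemma det_permute_rows_cols:
  fixes A :: "'a::comm_ring_1 mat"
  assumes A: "A \<in> carrier_mat n n" and p: "p permutes {0..<n}"
  shows "det (mat n n (\<lambda>(i, j). A $$ (p i, p j))) = det A"
proof -
  have p_less: "p i < n" if "i < n" for i using p that by (simp add: permutes_in_image)
  define C where "C = mat n n (\<lambda>(i, j). A $$ (i, p j))"
  have C: "C \<in> carrier_mat n n" unfolding C_def by simp
  have "det C = det (transpose_mat C)" using det_transpose[OF C] by simp
  also have "transpose_mat C = mat n n (\<lambda>(i, j). transpose_mat A $$ (p i, j))"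
    using A by (auto simp: C_def p_less)
  also have "det \<dots> = signof p * det A"
    using det_permute_rows[of "transpose_mat A" n p] A p det_transpose[OF A] by simp
  finally have det_C: "det C = signof p * det A" .
  have "mat n n (\<lambda>(i, j). A $$ (p i, p j)) = mat n n (\<lambda>(i, j). C $$ (p i, j))"
    by (auto simp: C_def p_less)
  then have "det (mat n n (\<lambda>(i, j). A $$ (p i, p j))) = signof p * (signof p * det A)"
    using det_permute_rows[OF C p] det_C by simp
  also have "\<dots> = det A" by (simp add: mult.assoc[symmetric] flip: of_int_mult)
  finally show ?thesis .
qed

lemma char_poly_permute_rows_cols:
  fixes A :: "'a::comm_ring_1 mat"
  assumes A: "A \<in> carrier_mat n n" and p: "p permutes {0..<n}"
  shows "char_poly (mat n n (\<lambda>(i, j). A $$ (p i, p j))) = char_poly A"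
proof -
  have p_less: "p i < n" if "i < n" for i using p that by (simp add: permutes_in_image)
  have p_eq_iff: "p i = p j \<longleftrightarrow> i = j" for i j using permutes_inj[OF p] by (auto dest: injD)
  have "char_poly_matrix (mat n n (\<lambda>(i, j). A $$ (p i, p j))) =
        mat n n (\<lambda>(i, j). char_poly_matrix A $$ (p i, p j))"
    using A by (auto simp: char_poly_matrix_def p_less p_eq_iff)
  then show ?thesis
    using det_permute_rows_cols[OF char_poly_matrix_closed[OF A] p] by (simp add: char_poly_def)
qed

definition deflation_mat :: "nat \<Rightarrow> nat \<Rightarrow> (nat \<Rightarrow> nat) \<Rightarrow> 'a::zero_neq_one mat" where
  "deflation_mat N K \<rho> = mat N N (\<lambda>(t, c). if K \<le> c \<and> t = \<rho> c then 1 else 0)"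

lemma deflation_mat_dim [simp]:
  "dim_row (deflation_mat N K \<rho>) = N" "dim_col (deflation_mat N K \<rho>) = N"
  by (simp_all add: deflation_mat_def)

lemma deflation_mat_carrier [simp]: "deflation_mat N K \<rho> \<in> carrier_mat N N"
  by (simp add: carrier_matI)

lemma deflation_mat_mult_left:
  fixes A :: "'a::semiring_1 mat"
  assumes "A \<in> carrier_mat N N" and "j < N" and "l < N"
  shows "(deflation_mat N K \<rho> * A) $$ (j, l) = (\<Sum>t \<in> {t. K \<le> t \<and> t < N \<and> \<rho> t = j}. A $$ (t, l))"
proof -
  have "(deflation_mat N K \<rho> * A) $$ (j, l) =
      (\<Sum>t \<in> {0..<N}. if K \<le> t \<and> \<rho> t = j then A $$ (t, l) else 0)"
    using assms by (auto simp: deflation_mat_def scalar_prod_def intro!: sum.cong)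
  also have "\<dots> = (\<Sum>t \<in> {t. K \<le> t \<and> t < N \<and> \<rho> t = j}. A $$ (t, l))"
    by (subst sum.inter_filter[symmetric]) (auto intro: sum.cong)
  finally show ?thesis .
qed

lemma deflation_mat_mult_right:
  fixes A :: "'a::semiring_1 mat"
  assumes "A \<in> carrier_mat N N" and "j < N" and "c < N"
    and "\<And>i. K \<le> i \<Longrightarrow> i < N \<Longrightarrow> \<rho> i < N"
  shows "(A * deflation_mat N K \<rho>) $$ (j, c) = (if K \<le> c then A $$ (j, \<rho> c) else 0)"
  using assms by (auto simp: deflation_mat_def scalar_prod_def if_distrib cong: if_cong)

lemma deflation_mat_square:
  assumes "\<And>i. K \<le> i \<Longrightarrow> i < N \<Longrightarrow> \<rho> i < K"
  shows "deflation_mat N K \<rho> * deflation_mat N K \<rho> = (0\<^sub>m N N :: 'a::semiring_1 mat)"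
proof -
  have "\<not> K \<le> \<rho> c" if "K \<le> c" "c < N" for c using assms[OF that] by simp
  then show ?thesis
    by (intro eq_matI) (auto simp: deflation_mat_def scalar_prod_def intro!: sum.neutral)
qed

lemma similar_mat_deflation:
  fixes A :: "'a::comm_ring_1 mat"
  assumes A: "A \<in> carrier_mat N N" and \<rho>: "\<And>i. K \<le> i \<Longrightarrow> i < N \<Longrightarrow> \<rho> i < K"
  shows "similar_mat A ((1\<^sub>m N + deflation_mat N K \<rho>) * A * (1\<^sub>m N - deflation_mat N K \<rho>))"
proof -
  define E :: "'a mat" where "E = deflation_mat N K \<rho>"
  define P where "P = 1\<^sub>m N - E"
  define Q where "Q = 1\<^sub>m N + E"
  have E: "E \<in> carrier_mat N N" by (simp add: E_def)
  then have P: "P \<in> carrier_mat N N" and Q: "Q \<in> carrier_mat N N" by (simp_all add: P_def Q_def minus_carrier_mat)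
  have E_square: "E * E = 0\<^sub>m N N" unfolding E_def using \<rho> by (rule deflation_mat_square)
  have "Q * P = (1\<^sub>m N + E) - (E + E * E)"
    using E by (simp add: P_def Q_def mult_minus_distrib_mat[of _ N N _ N]
        add_mult_distrib_mat[of _ N N _ _ N] right_mult_one_mat[OF E] left_mult_one_mat[OF E])
  also have "\<dots> = 1\<^sub>m N" unfolding E_square using E by (intro eq_matI) auto
  finally have QP: "Q * P = 1\<^sub>m N" .
  have "P * Q = (1\<^sub>m N + E) - (E + E * E)"
    using E by (simp add: P_def Q_def minus_mult_distrib_mat[of _ N N _ _ N]
        mult_add_distrib_mat[of _ N N _ N] right_mult_one_mat[OF E] left_mult_one_mat[OF E])
  also have "\<dots> = 1\<^sub>m N" unfolding E_square using E by (intro eq_matI) auto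
  finally have PQ: "P * Q = 1\<^sub>m N" .
  have "P * (Q * A * P) * Q = (P * Q) * A * (P * Q)"
    using A P Q by (simp add: assoc_mult_mat[of _ N N _ N _ N])
  then have "A = P * (Q * A * P) * Q" using A by (simp add: PQ)
  then show ?thesis
    using A P Q PQ QP unfolding similar_mat_def similar_mat_wit_def Let_def
    by (auto simp flip: E_def P_def Q_def)
qed

lemma char_poly_four_block_mat_upper_right_zero:
  fixes A :: "'a::idom mat"
  assumes A: "A \<in> carrier_mat n n" and C: "C \<in> carrier_mat m n" and D: "D \<in> carrier_mat m m"
  shows "char_poly (four_block_mat A (0\<^sub>m n m) C D) = char_poly A * char_poly D"
proof -
  have "char_poly_matrix (four_block_mat A (0\<^sub>m n m) C D) =
      four_block_mat (char_poly_matrix A) (0\<^sub>m n m) (map_mat (\<lambda>a. [:- a:]) C) (char_poly_matrix D)"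
    using assms by (intro eq_matI) (auto simp: char_poly_matrix_def)
  then show ?thesis
    using assms unfolding char_poly_def
    by (simp add: det_four_block_mat_upper_right_zero[where m = m and n = n])
qed

lemma char_poly_smult_one_mat: "char_poly (\<mu> \<cdot>\<^sub>m 1\<^sub>m n) = [:- \<mu>, 1:] ^ n"
proof -
  have "char_poly (\<mu> \<cdot>\<^sub>m 1\<^sub>m n) = (\<Prod>a \<leftarrow> diag_mat (\<mu> \<cdot>\<^sub>m 1\<^sub>m n). [:- a, 1:])"
    by (rule char_poly_upper_triangular[of _ n]) (auto simp: upper_triangular_def)
  also have "diag_mat (\<mu> \<cdot>\<^sub>m 1\<^sub>m n) = replicate n \<mu>"
    by (auto simp: diag_mat_def intro: nth_equalityI)
  finally show ?thesis by simp
qed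

lemma deflation_conjugate_entry:
  fixes A :: "'a::comm_ring_1 mat"
  assumes A: "A \<in> carrier_mat N N" and \<rho>: "\<And>i. K \<le> i \<Longrightarrow> i < N \<Longrightarrow> \<rho> i < N"
    and j: "j < N" and c: "c < N"
  defines "row_sum \<equiv> \<lambda>j l. A $$ (j, l) + (\<Sum>t \<in> {t. K \<le> t \<and> t < N \<and> \<rho> t = j}. A $$ (t, l))"
  shows "((1\<^sub>m N + deflation_mat N K \<rho>) * A * (1\<^sub>m N - deflation_mat N K \<rho>)) $$ (j, c) =
    row_sum j c - (if K \<le> c then row_sum j (\<rho> c) else 0)"
proof -
  define E :: "'a mat" where "E = deflation_mat N K \<rho>"
  define B where "B = (1\<^sub>m N + E) * A"
  have E: "E \<in> carrier_mat N N" by (simp add: E_def)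
  then have B: "B \<in> carrier_mat N N" unfolding B_def using A by (intro mult_carrier_mat[of _ N N]) auto
  have "B = A + E * A" using A E by (simp add: B_def add_mult_distrib_mat[of _ N N _ _ N])
  then have B_entry: "B $$ (j, l) = row_sum j l" if "l < N" for l
  proof -
    assume "B = A + E * A"
    then have "B $$ (j, l) = A $$ (j, l) + (E * A) $$ (j, l)" using A E j that by simp
    also have "(E * A) $$ (j, l) = (\<Sum>t \<in> {t. K \<le> t \<and> t < N \<and> \<rho> t = j}. A $$ (t, l))"
      unfolding E_def using A j that by (rule deflation_mat_mult_left)
    finally show ?thesis by (simp add: row_sum_def)
  qed
  have "(1\<^sub>m N + E) * A * (1\<^sub>m N - E) = B - B * E"
    unfolding B_def[symmetric] using B E by (simp add: mult_minus_distrib_mat[of _ N N _ N])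
  then have "((1\<^sub>m N + E) * A * (1\<^sub>m N - E)) $$ (j, c) = B $$ (j, c) - (B * E) $$ (j, c)"
    using B E j c by simp
  also have "(B * E) $$ (j, c) = (if K \<le> c then B $$ (j, \<rho> c) else 0)"
    unfolding E_def using B j c \<rho> by (rule deflation_mat_mult_right)
  finally show ?thesis
    using B_entry c \<rho>[of c] unfolding E_def by auto
qed

lemma deflation_conjugate_right_block:
  fixes A :: "'a::comm_ring_1 mat"
  assumes A: "A \<in> carrier_mat N N" and \<rho>: "\<And>i. K \<le> i \<Longrightarrow> i < N \<Longrightarrow> \<rho> i < K"
    and column_difference: "\<And>j i. j < N \<Longrightarrow> K \<le> i \<Longrightarrow> i < N \<Longrightarrow>
      A $$ (j, i) - A $$ (j, \<rho> i) = \<mu> * ((if j = i then 1 else 0) - (if j = \<rho> i then 1 else 0))"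
    and j: "j < N" and c: "K \<le> c" "c < N"
  shows "((1\<^sub>m N + deflation_mat N K \<rho>) * A * (1\<^sub>m N - deflation_mat N K \<rho>)) $$ (j, c) =
    (if j = c then \<mu> else 0)"
proof -
  define S where "S = {t. K \<le> t \<and> t < N \<and> \<rho> t = j}"
  have \<rho>c: "\<rho> c < K" using \<rho> c by simp
  have "(\<Sum>t \<in> S. A $$ (t, c) - A $$ (t, \<rho> c)) = (\<Sum>t \<in> S. if t = c then \<mu> else 0)"
    using \<rho>c c column_difference[of _ c] by (intro sum.cong) (auto simp: S_def)
  also have "\<dots> = (if \<rho> c = j then \<mu> else 0)"
    using c by (simp add: S_def)
  finally have sum_difference: "(\<Sum>t \<in> S. A $$ (t, c) - A $$ (t, \<rho> c)) = (if \<rho> c = j then \<mu> else 0)" .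
  have \<rho>N: "\<rho> i < N" if "K \<le> i" "i < N" for i using \<rho>[OF that] that by simp
  have "((1\<^sub>m N + deflation_mat N K \<rho>) * A * (1\<^sub>m N - deflation_mat N K \<rho>)) $$ (j, c) =
      (A $$ (j, c) - A $$ (j, \<rho> c)) + (\<Sum>t \<in> S. A $$ (t, c) - A $$ (t, \<rho> c))"
    using deflation_conjugate_entry[where K = K and \<rho> = \<rho>, OF A \<rho>N j c(2)] c by (simp add: S_def sum_subtractf algebra_simps)
  also have "\<dots> = (if j = c then \<mu> else 0)"
    unfolding sum_difference column_difference[OF j c] using \<rho>c c by auto
  finally show ?thesis .
qed

text \<open>
  Conjugation by \<open>1 + deflation_mat\<close> (a similarity, as \<open>deflation_mat\<close> squares to zero)
  subtracts column \<open>\<rho> i\<close> from each column \<open>i \<ge> K\<close> and adds row \<open>i\<close> to row \<open>\<rho> i\<close>.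
  Under the column hypothesis this makes \<open>A\<close> block lower triangular with \<open>\<mu> \<cdot> 1\<close> in the
  lower right corner.
\<close>

lemma char_poly_deflate:
  fixes A :: "'a::idom mat" and \<rho> :: "nat \<Rightarrow> nat"
  assumes A: "A \<in> carrier_mat (K + R) (K + R)"
    and \<rho>: "\<And>i. K \<le> i \<Longrightarrow> i < K + R \<Longrightarrow> \<rho> i < K"
    and column_difference: "\<And>j i. j < K + R \<Longrightarrow> K \<le> i \<Longrightarrow> i < K + R \<Longrightarrow>
      A $$ (j, i) - A $$ (j, \<rho> i) = \<mu> * ((if j = i then 1 else 0) - (if j = \<rho> i then 1 else 0))"
  shows "char_poly A = char_poly (mat K K (\<lambda>(k, l).
      A $$ (k, l) + (\<Sum>t \<in> {t. K \<le> t \<and> t < K + R \<and> \<rho> t = k}. A $$ (t, l)))) * [:- \<mu>, 1:] ^ R"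
proof -
  define N where "N = K + R"
  define E :: "'a mat" where "E = deflation_mat N K \<rho>"
  define S where "S j = {t. K \<le> t \<and> t < N \<and> \<rho> t = j}" for j
  define T where "T = (1\<^sub>m N + E) * A * (1\<^sub>m N - E)"
  define Q where "Q = mat K K (\<lambda>(k, l). A $$ (k, l) + (\<Sum>t \<in> S k. A $$ (t, l)))"
  define L where "L = mat R K (\<lambda>(i, l). T $$ (K + i, l))"
  have AN: "A \<in> carrier_mat N N" and E: "E \<in> carrier_mat N N" using A by (simp_all add: N_def E_def)
  have \<rho>N: "\<rho> i < N" if "K \<le> i" "i < N" for i using \<rho> that by (fastforce simp: N_def)
  have S_empty: "S j = {}" if "K \<le> j" for j
    using \<rho> that unfolding S_def N_def by (auto dest: leD)
  have T_blocks: "T = four_block_mat Q (0\<^sub>m K R) L (\<mu> \<cdot>\<^sub>m 1\<^sub>m R)"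
  proof (rule eq_matI)
    fix j c assume "j < dim_row (four_block_mat Q (0\<^sub>m K R) L (\<mu> \<cdot>\<^sub>m 1\<^sub>m R))"
      and "c < dim_col (four_block_mat Q (0\<^sub>m K R) L (\<mu> \<cdot>\<^sub>m 1\<^sub>m R))"
    then have j: "j < N" and c: "c < N" by (simp_all add: Q_def N_def)
    show "T $$ (j, c) = four_block_mat Q (0\<^sub>m K R) L (\<mu> \<cdot>\<^sub>m 1\<^sub>m R) $$ (j, c)"
    proof (cases "c < K")
      case True
      then show ?thesis
        using j c deflation_conjugate_entry[where K = K and \<rho> = \<rho>, OF AN \<rho>N j c] S_empty[of j]
        by (auto simp: Q_def L_def N_def T_def E_def S_def)
    next
      case False
      have "T $$ (j, c) = (if j = c then \<mu> else 0)"
        unfolding T_def E_def using False c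
        by (intro deflation_conjugate_right_block[where K = K and \<rho> = \<rho> and \<mu> = \<mu>, OF AN \<rho>[folded N_def] column_difference[folded N_def] j]) simp_all
      then show ?thesis using j c False by (auto simp: Q_def N_def)
    qed
  qed (use E in \<open>simp_all add: Q_def L_def T_def N_def\<close>)
  have "similar_mat A T"
    unfolding T_def E_def using similar_mat_deflation[OF AN, of K \<rho>] \<rho> by (simp add: N_def)
  then have "char_poly A = char_poly T" by (rule char_poly_similar)
  also have "\<dots> = char_poly Q * [:- \<mu>, 1:] ^ R"
    unfolding T_blocks
    by (subst char_poly_four_block_mat_upper_right_zero) (auto simp: Q_def L_def char_poly_smult_one_mat)
  finally show ?thesis by (simp add: Q_def S_def N_def)
qed

lemma det_mat_2x2:
  fixes g :: "nat \<times> nat \<Rightarrow> 'a::comm_ring_1"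
  shows "det (mat 2 2 g) = g (0, 0) * g (1, 1) - g (0, 1) * g (1, 0)"
proof -
  have "det (mat 2 2 g) = (\<Sum>i<2. mat 2 2 g $$ (i, 0) * cofactor (mat 2 2 g) i 0)"
    by (rule laplace_expansion_column) auto
  also have "\<dots> = g (0, 0) * cofactor (mat 2 2 g) 0 0 + g (1, 0) * cofactor (mat 2 2 g) 1 0"
    by (simp add: numeral_2_eq_2)
  also have "cofactor (mat 2 2 g) 0 0 = g (1, 1)"
    unfolding cofactor_def by (subst det_single) (auto simp: mat_delete_def)
  also have "cofactor (mat 2 2 g) 1 0 = - g (0, 1)"
    unfolding cofactor_def by (subst det_single) (auto simp: mat_delete_def)
  finally show ?thesis by (simp add: algebra_simps)
qed

lemma char_poly_mat_2x2:
  fixes g :: "nat \<times> nat \<Rightarrow> 'a::comm_ring_1"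
  shows "char_poly (mat 2 2 g) =
    [:g (0, 0) * g (1, 1) - g (0, 1) * g (1, 0), - (g (0, 0) + g (1, 1)), 1:]"
proof -
  have "char_poly_matrix (mat 2 2 g) = mat 2 2 (\<lambda>(i, j). (if i = j then [:0, 1:] else 0) + [:- g (i, j):])"
    by (auto simp: char_poly_matrix_def)
  then have "char_poly (mat 2 2 g) =
      ([:- g (0, 0):] + [:0, 1:]) * ([:- g (1, 1):] + [:0, 1:]) - [:- g (0, 1):] * [:- g (1, 0):]"
    by (simp add: char_poly_def det_mat_2x2)
  then show ?thesis by (simp add: algebra_simps)
qed

section \<open>Distance matrices of complete multipartite graphs\<close>

lemma permutes_extending_inj_on:
  fixes r :: "nat \<Rightarrow> nat"
  assumes r_inj: "inj_on r {0..<K}" and r_range: "r ` {0..<K} \<subseteq> {0..<N}"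
  obtains \<sigma> where "\<sigma> permutes {0..<N}" and "\<And>k. k < K \<Longrightarrow> \<sigma> k = r k"
proof -
  have "K \<le> N" using card_mono[OF _ r_range] card_image[OF r_inj] by simp
  define W where "W = {0..<N} - r ` {0..<K}"
  have "card W = card {K..<N}"
    using card_Diff_subset[OF _ r_range] card_image[OF r_inj] by (simp add: W_def)
  then obtain g where g: "bij_betw g {K..<N} W" by (metis finite_same_card_bij finite_atLeastLessThan W_def finite_Diff)
  define \<sigma> where "\<sigma> i = (if i < K then r i else if i < N then g i else i)" for i
  have "bij_betw \<sigma> ({0..<K} \<union> {K..<N}) (r ` {0..<K} \<union> W)"
  proof (rule bij_betw_combine)
    show "bij_betw \<sigma> {0..<K} (r ` {0..<K})"
      using r_inj by (auto simp: \<sigma>_def bij_betw_def inj_on_def)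
    show "bij_betw \<sigma> {K..<N} W"
      using g by (rule bij_betw_cong[THEN iffD1, rotated]) (simp add: \<sigma>_def)
  qed (auto simp: W_def)
  moreover have "{0..<K} \<union> {K..<N} = {0..<N}" and "r ` {0..<K} \<union> W = {0..<N}"
    using \<open>K \<le> N\<close> r_range by (auto simp: W_def)
  ultimately have "\<sigma> permutes {0..<N}"
    by (intro bij_imp_permutes) (auto simp: \<sigma>_def)
  then show ?thesis by (rule that) (simp add: \<sigma>_def)
qed

definition multipartite_distance_mat :: "nat \<Rightarrow> (nat \<Rightarrow> nat) \<Rightarrow> 'a::comm_ring_1 mat" where
  "multipartite_distance_mat N part = mat N N (\<lambda>(i, j). if i = j then 0 else if part i = part j then 2 else 1)"

text \<open>
  The transposed quotient matrix of the equitable partition of \<open>multipartite_distance_mat\<close>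
  into parts of sizes \<open>s k\<close>.
\<close>

definition multipartite_quotient_mat :: "nat \<Rightarrow> (nat \<Rightarrow> 'a::comm_ring_1) \<Rightarrow> 'a mat" where
  "multipartite_quotient_mat K s = mat K K (\<lambda>(k, l). if k = l then 2 * (s k - 1) else s k)"

lemma multipartite_quotient_mat_cong:
  "(\<And>k. k < K \<Longrightarrow> s k = s' k) \<Longrightarrow> multipartite_quotient_mat K s = multipartite_quotient_mat K s'"
  by (auto simp: multipartite_quotient_mat_def)

lemma char_poly_multipartite_distance_mat_representatives_first:
  fixes part :: "nat \<Rightarrow> nat"
  assumes part_less: "\<And>i. i < N \<Longrightarrow> part i < K" and part_fixed: "\<And>k. k < K \<Longrightarrow> part k = k"
    and "K \<le> N"
  shows "char_poly (multipartite_distance_mat N part :: 'a::idom mat) =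
    char_poly (multipartite_quotient_mat K (\<lambda>k. of_nat (card {i. i < N \<and> part i = k}))) * [:2, 1:] ^ (N - K)"
proof -
  define D :: "'a mat" where "D = multipartite_distance_mat N part"
  define S where "S k = {t. K \<le> t \<and> t < N \<and> part t = k}" for k
  have "char_poly D = char_poly (mat K K (\<lambda>(k, l).
      D $$ (k, l) + (\<Sum>t \<in> {t. K \<le> t \<and> t < K + (N - K) \<and> part t = k}. D $$ (t, l)))) * [:- (- 2), 1:] ^ (N - K)"
  proof (rule char_poly_deflate)
    show "D \<in> carrier_mat (K + (N - K)) (K + (N - K))"
      using \<open>K \<le> N\<close> by (simp add: D_def multipartite_distance_mat_def)
    show "part i < K" if "K \<le> i" "i < K + (N - K)" for i
      using that part_less \<open>K \<le> N\<close> by simp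
    show "D $$ (j, i) - D $$ (j, part i) = - 2 * ((if j = i then 1 else 0) - (if j = part i then 1 else 0))"
      if "j < K + (N - K)" "K \<le> i" "i < K + (N - K)" for j i
      using that part_less[of i] part_fixed[of "part i"] \<open>K \<le> N\<close>
      by (auto simp: D_def multipartite_distance_mat_def)
  qed
  also have "mat K K (\<lambda>(k, l). D $$ (k, l) + (\<Sum>t \<in> {t. K \<le> t \<and> t < K + (N - K) \<and> part t = k}. D $$ (t, l)))
      = multipartite_quotient_mat K (\<lambda>k. of_nat (card {i. i < N \<and> part i = k}))"
  proof (rule eq_matI)
    fix k l assume "k < dim_row (multipartite_quotient_mat K (\<lambda>k. of_nat (card {i. i < N \<and> part i = k})) :: 'a mat)"
      and "l < dim_col (multipartite_quotient_mat K (\<lambda>k. of_nat (card {i. i < N \<and> part i = k})) :: 'a mat)"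
    then have k: "k < K" and l: "l < K" by (simp_all add: multipartite_quotient_mat_def)
    have "{i. i < N \<and> part i = k} = insert k (S k)"
      using k part_fixed \<open>K \<le> N\<close> by (auto simp: S_def) (metis not_le)
    moreover have "finite (S k)" unfolding S_def by (rule finite_subset[of _ "{..<N}"]) auto
    moreover have "k \<notin> S k" using k by (simp add: S_def)
    ultimately have card_part: "card {i. i < N \<and> part i = k} = Suc (card (S k))" by simp
    have "(\<Sum>t \<in> S k. D $$ (t, l)) = of_nat (card (S k)) * (if k = l then 2 else 1)"
      using l part_fixed[OF l] by (simp add: S_def D_def multipartite_distance_mat_def)
    then show "mat K K (\<lambda>(k, l). D $$ (k, l) + (\<Sum>t \<in> {t. K \<le> t \<and> t < K + (N - K) \<and> part t = k}. D $$ (t, l))) $$ (k, l)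
      = multipartite_quotient_mat K (\<lambda>k. of_nat (card {i. i < N \<and> part i = k})) $$ (k, l)"
      using k l part_fixed \<open>K \<le> N\<close> card_part
      by (auto simp: S_def D_def multipartite_distance_mat_def multipartite_quotient_mat_def algebra_simps)
  qed (simp_all add: multipartite_quotient_mat_def)
  finally show ?thesis by (simp add: D_def)
qed

lemma card_Collect_bij_betw:
  assumes "bij_betw f A B"
  shows "card {x \<in> A. P (f x)} = card {y \<in> B. P y}"
proof -
  have "bij_betw f {x \<in> A. P (f x)} {y \<in> B. P y}"
    using assms by (auto simp: bij_betw_def inj_on_def)
  then show ?thesis by (rule bij_betw_same_card)
qed

lemma char_poly_multipartite_distance_mat:
  fixes part :: "nat \<Rightarrow> nat"
  assumes parts: "part ` {0..<N} = {0..<K}"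
  shows "char_poly (multipartite_distance_mat N part :: 'a::idom mat) =
    char_poly (multipartite_quotient_mat K (\<lambda>k. of_nat (card {i. i < N \<and> part i = k}))) * [:2, 1:] ^ (N - K)"
proof -
  obtain r where r: "\<And>k. k < K \<Longrightarrow> r k < N \<and> part (r k) = k"
  proof -
    have "\<exists>i. i < N \<and> part i = k" if "k < K" for k
    proof -
      have "k \<in> part ` {0..<N}" using parts that by simp
      then show ?thesis by auto
    qed
    then show ?thesis using that by metis
  qed
  then have r_inj: "inj_on r {0..<K}" by (metis atLeastLessThan_iff inj_onI)
  have r_range: "r ` {0..<K} \<subseteq> {0..<N}" using r by auto
  obtain \<sigma> where \<sigma>: "\<sigma> permutes {0..<N}" and \<sigma>_r: "\<And>k. k < K \<Longrightarrow> \<sigma> k = r k"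
    using permutes_extending_inj_on[OF r_inj r_range] by blast
  have \<sigma>_less: "\<sigma> i < N" if "i < N" for i using \<sigma> that by (simp add: permutes_in_image)
  have \<sigma>_eq_iff: "\<sigma> i = \<sigma> j \<longleftrightarrow> i = j" for i j using permutes_inj[OF \<sigma>] by (auto dest: injD)
  have "K \<le> N" using card_image_le[of "{0..<N}" part] parts by simp
  have card_parts: "card {i. i < N \<and> part (\<sigma> i) = k} = card {i. i < N \<and> part i = k}" for k
    using card_Collect_bij_betw[OF permutes_imp_bij[OF \<sigma>], of "\<lambda>i. part i = k"] by simp
  have "char_poly (multipartite_distance_mat N part :: 'a mat) =
      char_poly (mat N N (\<lambda>(i, j). (multipartite_distance_mat N part :: 'a mat) $$ (\<sigma> i, \<sigma> j)))"
    by (rule char_poly_permute_rows_cols[symmetric, OF _ \<sigma>]) (simp add: multipartite_distance_mat_def)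
  also have "mat N N (\<lambda>(i, j). (multipartite_distance_mat N part :: 'a mat) $$ (\<sigma> i, \<sigma> j))
      = multipartite_distance_mat N (part \<circ> \<sigma>)"
    by (auto simp: multipartite_distance_mat_def \<sigma>_less \<sigma>_eq_iff)
  also have "char_poly \<dots> = char_poly (multipartite_quotient_mat K
      (\<lambda>k. of_nat (card {i. i < N \<and> (part \<circ> \<sigma>) i = k}) :: 'a)) * [:2, 1:] ^ (N - K)"
  proof (rule char_poly_multipartite_distance_mat_representatives_first)
    show "(part \<circ> \<sigma>) i < K" if "i < N" for i using parts \<sigma>_less[OF that] by auto
    show "(part \<circ> \<sigma>) k = k" if "k < K" for k using r \<sigma>_r that by simp
  qed fact
  finally show ?thesis by (simp add: card_parts)
qed

lemma char_poly_multipartite_quotient_mat: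
  fixes s :: "nat \<Rightarrow> 'a::idom"
  assumes "m \<ge> 1" and s_0: "s 0 = q" and s_pos: "\<And>k. 0 < k \<Longrightarrow> k \<le> m \<Longrightarrow> s k = p"
  shows "char_poly (multipartite_quotient_mat (Suc m) s) =
    [:2 * (q - 1) * (2 * (p - 1) + of_nat (m - 1) * p) - q * (of_nat m * p),
      - (2 * (q - 1) + (2 * (p - 1) + of_nat (m - 1) * p)), 1:] * [:- (p - 2), 1:] ^ (m - 1)"
proof -
  define Q where "Q = (multipartite_quotient_mat (Suc m) s :: 'a mat)"
  have m: "Suc m = 2 + (m - 1)" using \<open>m \<ge> 1\<close> by simp
  have Q_entry: "Q $$ (j, i) = (if j = i then 2 * (s j - 1) else s j)" if "j \<le> m" "i \<le> m" for j i
    using that by (simp add: Q_def multipartite_quotient_mat_def)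
  have "char_poly Q = char_poly (mat 2 2 (\<lambda>(k, l).
      Q $$ (k, l) + (\<Sum>t \<in> {t. 2 \<le> t \<and> t < 2 + (m - 1) \<and> 1 = k}. Q $$ (t, l)))) * [:- (p - 2), 1:] ^ (m - 1)"
  proof (rule char_poly_deflate)
    show "Q \<in> carrier_mat (2 + (m - 1)) (2 + (m - 1))"
      using m by (simp add: Q_def multipartite_quotient_mat_def)
    show "Q $$ (j, i) - Q $$ (j, 1) = (p - 2) * ((if j = i then 1 else 0) - (if j = 1 then 1 else 0))"
      if "j < 2 + (m - 1)" "2 \<le> i" "i < 2 + (m - 1)" for j i
    proof -
      have j: "j \<le> m" and i: "1 < i" "i \<le> m" using that \<open>m \<ge> 1\<close> by auto
      then consider "j = 0" | "j = 1" | "j = i" | "0 < j" "j \<noteq> 1" "j \<noteq> i" by auto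
      then show ?thesis
        using i j \<open>m \<ge> 1\<close> s_pos[of i] s_pos[of j] s_pos[of 1] Q_entry
        by cases (simp_all add: algebra_simps)
    qed
  qed simp
  also have "mat 2 2 (\<lambda>(k, l). Q $$ (k, l) + (\<Sum>t \<in> {t. 2 \<le> t \<and> t < 2 + (m - 1) \<and> 1 = k}. Q $$ (t, l))) =
      mat 2 2 (\<lambda>(k, l). if k = 0 then (if l = 0 then 2 * (q - 1) else q)
        else (if l = 0 then of_nat m * p else 2 * (p - 1) + of_nat (m - 1) * p))"
  proof -
    have tail: "(\<Sum>t \<in> {t. 2 \<le> t \<and> t < 2 + (m - 1)}. Q $$ (t, l)) = of_nat (m - 1) * p" if "l < 2" for l
    proof -
      have "(\<Sum>t \<in> {t. 2 \<le> t \<and> t < 2 + (m - 1)}. Q $$ (t, l)) = (\<Sum>t \<in> {2..<2 + (m - 1)}. p)"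
        using that s_pos Q_entry by (intro sum.cong) auto
      then show ?thesis by simp
    qed
    have "of_nat m * p = p + of_nat (m - 1) * p" using \<open>m \<ge> 1\<close> by (simp add: of_nat_diff algebra_simps)
    then show ?thesis
      using \<open>m \<ge> 1\<close> s_0 s_pos[of 1] Q_entry[of 0 0] Q_entry[of 0 1] Q_entry[of 1 0] Q_entry[of 1 1]
        tail[of 0] tail[of 1]
      by (intro eq_matI) (auto simp: less_2_cases_iff)
  qed
  finally show ?thesis by (simp add: Q_def char_poly_mat_2x2)
qed

lemma monic_quadratic_eq_prod_roots:
  fixes b c :: real
  assumes "0 \<le> b\<^sup>2 - 4 * c"
  shows "[:c, b, 1:] = [:- ((- b + sqrt (b\<^sup>2 - 4 * c)) / 2), 1:] * [:- ((- b - sqrt (b\<^sup>2 - 4 * c)) / 2), 1:]"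
proof -
  define s where "s = sqrt (b\<^sup>2 - 4 * c)"
  have "s * s = b\<^sup>2 - 4 * c" using assms by (simp add: s_def flip: power2_eq_square)
  then show ?thesis unfolding s_def[symmetric] by (simp add: field_simps power2_eq_square)
qed

lemma metacyclic_quadratic_factor:
  fixes m n :: nat
  assumes "m \<ge> 1"
  shows "[:2 * (real ((m - 1) * n) - 1) * (2 * (real n - 1) + real (m - 1) * real n)
        - real ((m - 1) * n) * (real m * real n),
      - (2 * (real ((m - 1) * n) - 1) + (2 * (real n - 1) + real (m - 1) * real n)), 1:] =
    [:- ((- (4 + real n - 3 * real m * real n) + real n * sqrt (5 * (real m)\<^sup>2 - 10 * real m + 9)) / 2), 1:]
    * [:- ((- (4 + real n - 3 * real m * real n) - real n * sqrt (5 * (real m)\<^sup>2 - 10 * real m + 9)) / 2), 1:]"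
    (is "[:?c, ?b, 1:] = _")
proof -
  have neg_b: "- ?b = - (4 + real n - 3 * real m * real n)"
    using assms by (simp add: of_nat_diff algebra_simps)
  have discriminant: "?b\<^sup>2 - 4 * ?c = (real n)\<^sup>2 * (5 * (real m)\<^sup>2 - 10 * real m + 9)"
    using assms by (simp add: of_nat_diff power2_eq_square algebra_simps)
  have "0 \<le> 5 * (real m)\<^sup>2 - 10 * real m + 9"
    using zero_le_power2[of "real m - 1"] by (simp add: power2_eq_square algebra_simps)
  then have sqrt_discriminant: "sqrt (?b\<^sup>2 - 4 * ?c) = real n * sqrt (5 * (real m)\<^sup>2 - 10 * real m + 9)"
    and "0 \<le> ?b\<^sup>2 - 4 * ?c"
    unfolding discriminant by (simp_all add: real_sqrt_mult)
  then have "[:?c, ?b, 1:] =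
      [:- ((- ?b + sqrt (?b\<^sup>2 - 4 * ?c)) / 2), 1:] * [:- ((- ?b - sqrt (?b\<^sup>2 - 4 * ?c)) / 2), 1:]"
    by (intro monic_quadratic_eq_prod_roots)
  then show ?thesis unfolding sqrt_discriminant neg_b .
qed

lemma char_poly_metacyclic_quotient_mat:
  fixes m n :: nat
  assumes "m \<ge> 1"
  shows "char_poly (multipartite_quotient_mat (Suc m) (\<lambda>k. if k = 0 then real ((m - 1) * n) else real n)) =
    [:- (real n - 2), 1:] ^ (m - 1)
    * [:- ((- (4 + real n - 3 * real m * real n) + real n * sqrt (5 * (real m)\<^sup>2 - 10 * real m + 9)) / 2), 1:]
    * [:- ((- (4 + real n - 3 * real m * real n) - real n * sqrt (5 * (real m)\<^sup>2 - 10 * real m + 9)) / 2), 1:]"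
proof -
  have "char_poly (multipartite_quotient_mat (Suc m) (\<lambda>k. if k = 0 then real ((m - 1) * n) else real n)) =
    [:2 * (real ((m - 1) * n) - 1) * (2 * (real n - 1) + real (m - 1) * real n)
        - real ((m - 1) * n) * (real m * real n),
      - (2 * (real ((m - 1) * n) - 1) + (2 * (real n - 1) + real (m - 1) * real n)), 1:]
    * [:- (real n - 2), 1:] ^ (m - 1)"
    using assms by (intro char_poly_multipartite_quotient_mat) simp_all
  then show ?thesis unfolding metacyclic_quadratic_factor[OF assms] by (simp only: mult_ac)
qed

section \<open>Distances in the non-commuting graph\<close>

lemma nc_walk_length_one: "nc_walk G p u v \<Longrightarrow> length p = 1 \<Longrightarrow> u = v"
  by (cases p) (auto simp: nc_walk_def)

lemma nc_walk_length_two: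
  assumes "nc_walk G p u v" and "length p = 2"
  shows "nc_adj G u v"
proof -
  obtain z1 z2 where "p = [z1, z2]" using assms(2) by (auto simp: length_Suc_conv numeral_2_eq_2)
  then show ?thesis using assms(1) by (auto simp: nc_walk_def)
qed

lemma nc_dist_eqI:
  assumes "nc_walk G p u v" and "length p = Suc k"
    and "\<And>q. nc_walk G q u v \<Longrightarrow> Suc k \<le> length q"
  shows "nc_dist G u v = k"
  unfolding nc_dist_def
proof (rule Least_equality)
  show "\<exists>p. nc_walk G p u v \<and> length p = Suc k" using assms(1,2) by blast
qed (use assms(3) in fastforce)

lemma nc_dist_multipartite:
  fixes part :: "'a \<Rightarrow> nat"
  assumes adj: "\<And>u v. nc_adj G u v \<longleftrightarrow> u \<in> nc_vertices G \<and> v \<in> nc_vertices G \<and> part u \<noteq> part v"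
    and other_part: "\<And>u. u \<in> nc_vertices G \<Longrightarrow> \<exists>w \<in> nc_vertices G. part w \<noteq> part u"
    and u: "u \<in> nc_vertices G" and v: "v \<in> nc_vertices G"
  shows "nc_dist G u v = (if u = v then 0 else if part u = part v then 2 else 1)"
proof -
  have walk_nonempty: "1 \<le> length q" if "nc_walk G q u v" for q
    using that by (cases q) (auto simp: nc_walk_def)
  consider "u = v" | "u \<noteq> v" "part u \<noteq> part v" | "u \<noteq> v" "part u = part v" by blast
  then show ?thesis
  proof cases
    case 1
    then have "nc_walk G [u] u v" using u by (simp add: nc_walk_def)
    with 1 show ?thesis using walk_nonempty by (auto intro: nc_dist_eqI)
  next
    case 2
    then have "nc_walk G [u, v] u v" using u v adj by (simp add: nc_walk_def)
    moreover have "Suc 1 \<le> length q" if "nc_walk G q u v" for q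
      using walk_nonempty[OF that] nc_walk_length_one[OF that] 2 by fastforce
    ultimately have "nc_dist G u v = 1" by (intro nc_dist_eqI) auto
    then show ?thesis using 2 by simp
  next
    case 3
    obtain w where w: "w \<in> nc_vertices G" "part w \<noteq> part u" using other_part[OF u] by blast
    have "nc_walk G [u, w, v] u v"
      using u v w 3 adj by (auto simp: nc_walk_def less_Suc_eq nth_Cons')
    moreover have "Suc 2 \<le> length q" if "nc_walk G q u v" for q
    proof -
      have "length q \<noteq> 1" using nc_walk_length_one[OF that] 3 by blast
      moreover have "length q \<noteq> 2" using nc_walk_length_two[OF that] 3 adj by blast
      ultimately show ?thesis using walk_nonempty[OF that] by simp
    qed
    ultimately have "nc_dist G u v = 2" by (intro nc_dist_eqI) auto
    then show ?thesis using 3 by simp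
  qed
qed

lemma nc_distance_matrix_multipartite:
  fixes part :: "'a \<Rightarrow> nat"
  assumes dist: "\<And>u v. u \<in> nc_vertices G \<Longrightarrow> v \<in> nc_vertices G \<Longrightarrow>
      nc_dist G u v = (if u = v then 0 else if part u = part v then 2 else 1)"
    and f: "bij_betw f {0..<card (nc_vertices G)} (nc_vertices G)"
  shows "nc_distance_matrix G f = multipartite_distance_mat (card (nc_vertices G)) (part \<circ> f)"
proof -
  have f_in: "f i \<in> nc_vertices G" if "i < card (nc_vertices G)" for i
    using f that by (auto simp: bij_betw_def)
  have f_eq_iff: "f i = f j \<longleftrightarrow> i = j" if "i < card (nc_vertices G)" "j < card (nc_vertices G)" for i j
    using f that by (auto simp: bij_betw_def dest: inj_onD)
  show ?thesis
    by (auto simp: nc_distance_matrix_def multipartite_distance_mat_def dist f_in f_eq_iff)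
qed

section \<open>The metacyclic group\<close>

lemma pred_pow_mod_eq_neg_one_pow:
  assumes "m \<ge> 1"
  shows "int ((m - 1) ^ y) mod int m = (- 1) ^ y mod int m"
proof -
  have "(int m - 1) mod int m = - 1 mod int m" by (simp add: mod_diff_left_eq)
  then have "(int m - 1) ^ y mod int m = (- 1) ^ y mod int m" by (metis power_mod)
  then show ?thesis using assms by simp
qed

lemma odd_dvd_double_iff:
  fixes z :: int
  assumes "odd m" and "\<bar>z\<bar> < int m"
  shows "int m dvd 2 * z \<longleftrightarrow> z = 0"
proof
  assume "int m dvd 2 * z"
  moreover have "coprime (int m) 2" using \<open>odd m\<close> by (simp add: coprime_commute)
  ultimately have "int m dvd z" by (simp add: coprime_dvd_mult_right_iff)
  show "z = 0"
  proof (rule ccontr)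
    assume "z \<noteq> 0"
    then have "\<bar>int m\<bar> \<le> \<bar>z\<bar>" using dvd_imp_le_int \<open>int m dvd z\<close> by blast
    then show False using \<open>\<bar>z\<bar> < int m\<close> by simp
  qed
qed simp

lemma nat_mod_eq_iff_int: "p mod m = q mod m \<longleftrightarrow> int p mod int m = int q mod int m"
  by (metis of_nat_eq_iff of_nat_mod)

lemma (in group) nat_pow_eq_nat_pow_mod:
  fixes i k :: nat
  assumes "c \<in> carrier G" and "c [^] k = \<one>"
  shows "c [^] i = c [^] (i mod k)"
proof -
  have "c [^] i = c [^] (k * (i div k)) \<otimes> c [^] (i mod k)"
    using nat_pow_mult[OF assms(1), of "k * (i div k)" "i mod k"] by simp
  also have "c [^] (k * (i div k)) = \<one>"
    using assms by (simp flip: nat_pow_pow)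
  finally show ?thesis using assms(1) by simp
qed

locale metacyclic_group = group +
  fixes a b :: 'a and m n :: nat
  assumes m_odd: "odd m" and m_gt_2: "m > 2" and n_pos: "n \<ge> 1"
    and a_closed [simp]: "a \<in> carrier G" and b_closed [simp]: "b \<in> carrier G"
    and generated: "generate G {a, b} = carrier G"
    and a_pow_m: "a [^] m = \<one>" and b_pow_2n: "b [^] (2 * n) = \<one>"
    and conj_a: "b \<otimes> a \<otimes> inv b = inv a"
    and order: "card (carrier G) = 2 * m * n"
begin

abbreviation normal_form :: "nat \<Rightarrow> nat \<Rightarrow> 'a" where
  "normal_form x y \<equiv> a [^] x \<otimes> b [^] y"

abbreviation exponents :: "(nat \<times> nat) set" where
  "exponents \<equiv> {0..<m} \<times> {0..<2 * n}"

lemma inv_a_eq: "inv a = a [^] (m - 1)"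
proof (rule inv_equality)
  have "m = Suc (m - 1)" using m_gt_2 by simp
  then show "a [^] (m - 1) \<otimes> a = \<one>" using a_pow_m by (metis nat_pow_Suc)
qed simp_all

lemma inv_b_eq: "inv b = b [^] (2 * n - 1)"
proof (rule inv_equality)
  have "2 * n = Suc (2 * n - 1)" using n_pos by simp
  then show "b [^] (2 * n - 1) \<otimes> b = \<one>" using b_pow_2n by (metis nat_pow_Suc)
qed simp_all

lemma b_mult_a: "b \<otimes> a = a [^] (m - 1) \<otimes> b"
  using conj_a inv_solve_right[of "inv a" "b \<otimes> a" b] by (simp add: inv_a_eq)

lemma b_mult_a_pow: "b \<otimes> a [^] (k::nat) = a [^] ((m - 1) * k) \<otimes> b"
proof (induction k)
  case (Suc k)
  have "b \<otimes> a [^] Suc k = (b \<otimes> a [^] k) \<otimes> a" by (simp add: m_assoc)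
  also have "\<dots> = a [^] ((m - 1) * k) \<otimes> (b \<otimes> a)" using Suc.IH by (simp add: m_assoc)
  also have "\<dots> = (a [^] ((m - 1) * k) \<otimes> a [^] (m - 1)) \<otimes> b" by (simp add: b_mult_a m_assoc)
  also have "\<dots> = a [^] ((m - 1) * Suc k) \<otimes> b" by (simp add: nat_pow_mult add.commute)
  finally show ?case .
qed simp

lemma b_pow_mult_a_pow: "b [^] (j::nat) \<otimes> a [^] (k::nat) = a [^] ((m - 1) ^ j * k) \<otimes> b [^] j"
proof (induction j arbitrary: k)
  case (Suc j)
  have "b [^] Suc j \<otimes> a [^] k = b [^] j \<otimes> (b \<otimes> a [^] k)" by (simp add: m_assoc)
  also have "\<dots> = (b [^] j \<otimes> a [^] ((m - 1) * k)) \<otimes> b" by (simp add: b_mult_a_pow m_assoc)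
  also have "\<dots> = a [^] ((m - 1) ^ j * ((m - 1) * k)) \<otimes> b [^] Suc j" by (simp add: Suc.IH m_assoc)
  finally show ?case by (simp add: ac_simps)
qed simp

lemma normal_form_mult:
  "normal_form x y \<otimes> normal_form x' y' = normal_form (x + (m - 1) ^ y * x') (y + y')"
proof -
  have "normal_form x y \<otimes> normal_form x' y' = a [^] x \<otimes> (b [^] y \<otimes> a [^] x') \<otimes> b [^] y'"
    by (simp add: m_assoc)
  also have "\<dots> = normal_form (x + (m - 1) ^ y * x') (y + y')"
    by (simp add: b_pow_mult_a_pow m_assoc flip: nat_pow_mult)
  finally show ?thesis .
qed

lemma normal_form_mod: "normal_form x y = normal_form (x mod m) (y mod (2 * n))"
  using nat_pow_eq_nat_pow_mod[OF a_closed a_pow_m, of x] nat_pow_eq_nat_pow_mod[OF b_closed b_pow_2n, of y]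
  by simp

lemma generate_subset_normal_forms: "g \<in> generate G {a, b} \<Longrightarrow> g \<in> range (case_prod normal_form)"
proof (induction rule: generate.induct)
  case one
  have "\<one> = case_prod normal_form (0, 0)" by simp
  then show ?case by (rule range_eqI)
next
  case (incl h)
  then have "h = case_prod normal_form (1, 0) \<or> h = case_prod normal_form (0, 1)" by auto
  then show ?case by (blast intro: range_eqI)
next
  case (inv h)
  then have "inv h = case_prod normal_form (m - 1, 0) \<or> inv h = case_prod normal_form (0, 2 * n - 1)"
    by (auto simp: inv_a_eq inv_b_eq)
  then show ?case by (blast intro: range_eqI)
next
  case (eng h1 h2)
  then obtain x y x' y' where "h1 = normal_form x y" and "h2 = normal_form x' y'" by auto
  then have "h1 \<otimes> h2 = case_prod normal_form (x + (m - 1) ^ y * x', y + y')"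
    by (simp only: normal_form_mult prod.case)
  then show ?case by (rule range_eqI)
qed

lemma normal_form_image: "case_prod normal_form ` exponents = carrier G"
proof
  show "case_prod normal_form ` exponents \<subseteq> carrier G" by auto
  show "carrier G \<subseteq> case_prod normal_form ` exponents"
  proof
    fix g assume "g \<in> carrier G"
    then have "g \<in> range (case_prod normal_form)" using generated generate_subset_normal_forms by simp
    then obtain x y where "g = normal_form x y" by auto
    then have "g = normal_form (x mod m) (y mod (2 * n))" using normal_form_mod[of x y] by simp
    moreover have "(x mod m, y mod (2 * n)) \<in> exponents" using m_gt_2 n_pos by auto
    ultimately show "g \<in> case_prod normal_form ` exponents" by (auto intro: image_eqI)
  qed
qed

lemma inj_on_normal_form: "inj_on (case_prod normal_form) exponents"
  by (rule eq_card_imp_inj_on) (simp_all add: normal_form_image order card_cartesian_product)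

lemma normal_form_eq_iff:
  "normal_form x y = normal_form x' y' \<longleftrightarrow> x mod m = x' mod m \<and> y mod (2 * n) = y' mod (2 * n)"
proof
  assume "normal_form x y = normal_form x' y'"
  have "normal_form (x mod m) (y mod (2 * n)) = normal_form x y" by (rule normal_form_mod[symmetric])
  also have "\<dots> = normal_form x' y'" by fact
  also have "\<dots> = normal_form (x' mod m) (y' mod (2 * n))" by (rule normal_form_mod)
  finally have "case_prod normal_form (x mod m, y mod (2 * n)) = case_prod normal_form (x' mod m, y' mod (2 * n))"
    by simp
  moreover have "(x mod m, y mod (2 * n)) \<in> exponents" and "(x' mod m, y' mod (2 * n)) \<in> exponents"
    using m_gt_2 n_pos by auto
  ultimately have "(x mod m, y mod (2 * n)) = (x' mod m, y' mod (2 * n))"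
    by (rule inj_onD[OF inj_on_normal_form])
  then show "x mod m = x' mod m \<and> y mod (2 * n) = y' mod (2 * n)" by simp
next
  assume "x mod m = x' mod m \<and> y mod (2 * n) = y' mod (2 * n)"
  then have "normal_form (x mod m) (y mod (2 * n)) = normal_form (x' mod m) (y' mod (2 * n))" by simp
  then show "normal_form x y = normal_form x' y'"
    using normal_form_mod[of x y] normal_form_mod[of x' y'] by argo
qed

lemma normal_form_commute_iff:
  "normal_form x y \<otimes> normal_form x' y' = normal_form x' y' \<otimes> normal_form x y \<longleftrightarrow>
    int m dvd (int x + (- 1) ^ y * int x') - (int x' + (- 1) ^ y' * int x)"
proof -
  have reduce: "(int u + int ((m - 1) ^ j) * int v) mod int m = (int u + (- 1) ^ j * int v) mod int m"
    for u v j
    using pred_pow_mod_eq_neg_one_pow[of m j] m_gt_2 by (intro mod_add_cong mod_mult_cong) auto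
  have "normal_form x y \<otimes> normal_form x' y' = normal_form x' y' \<otimes> normal_form x y \<longleftrightarrow>
      (x + (m - 1) ^ y * x') mod m = (x' + (m - 1) ^ y' * x) mod m"
    by (simp add: normal_form_mult normal_form_eq_iff add.commute)
  also have "\<dots> \<longleftrightarrow> (int x + int ((m - 1) ^ y) * int x') mod int m = (int x' + int ((m - 1) ^ y') * int x) mod int m"
    unfolding nat_mod_eq_iff_int by (simp only: of_nat_add of_nat_mult)
  also have "\<dots> \<longleftrightarrow> (int x + (- 1) ^ y * int x') mod int m = (int x' + (- 1) ^ y' * int x) mod int m"
    by (simp only: reduce)
  also have "\<dots> \<longleftrightarrow> int m dvd (int x + (- 1) ^ y * int x') - (int x' + (- 1) ^ y' * int x)"
    by (rule mod_eq_dvd_iff)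
  finally show ?thesis .
qed

lemma normal_form_commute_iff_cases:
  assumes "x < m" and "x' < m"
  shows "normal_form x y \<otimes> normal_form x' y' = normal_form x' y' \<otimes> normal_form x y \<longleftrightarrow>
    (even y \<and> even y') \<or> (even y \<and> odd y' \<and> x = 0) \<or> (odd y \<and> even y' \<and> x' = 0) \<or> (odd y \<and> odd y' \<and> x = x')"
proof -
  have double: "int m dvd 2 * z \<longleftrightarrow> z = 0" if "\<bar>z\<bar> < int m" for z
    using m_odd that by (rule odd_dvd_double_iff)
  consider "even y" "even y'" | "even y" "odd y'" | "odd y" "even y'" | "odd y" "odd y'" by blast
  then show ?thesis
  proof cases
    case 2
    then show ?thesis using double[of "int x"] assms by (simp add: normal_form_commute_iff)
  next
    case 3
    then show ?thesis using double[of "- int x'"] assms by (simp add: normal_form_commute_iff)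
  next
    case 4
    then show ?thesis using double[of "int x - int x'"] assms
      by (simp add: normal_form_commute_iff algebra_simps)
  qed (simp add: normal_form_commute_iff)
qed

lemma normal_form_in_centre_iff:
  assumes "(x, y) \<in> exponents"
  shows "normal_form x y \<in> grp_centre G \<longleftrightarrow> x = 0 \<and> even y"
proof
  assume central: "normal_form x y \<in> grp_centre G"
  have "normal_form x y \<otimes> normal_form 1 0 = normal_form 1 0 \<otimes> normal_form x y"
    using central by (simp add: grp_centre_def)
  then have "even y" using assms m_gt_2 normal_form_commute_iff_cases[of x 1 y 0] by auto
  have "normal_form x y \<otimes> normal_form 0 1 = normal_form 0 1 \<otimes> normal_form x y"
    using central by (simp add: grp_centre_def)
  then have "x = 0" using assms \<open>even y\<close> normal_form_commute_iff_cases[of x 0 y 1] by auto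
  with \<open>even y\<close> show "x = 0 \<and> even y" by simp
next
  assume "x = 0 \<and> even y"
  then have commutes: "normal_form x y \<otimes> normal_form x' y' = normal_form x' y' \<otimes> normal_form x y"
    if "(x', y') \<in> exponents" for x' y'
    using that assms normal_form_commute_iff_cases[of x x' y y'] by auto
  show "normal_form x y \<in> grp_centre G"
    unfolding grp_centre_def
  proof (intro CollectI conjI ballI)
    fix w assume "w \<in> carrier G"
    then obtain p where "p \<in> exponents" and "w = case_prod normal_form p"
      unfolding normal_form_image[symmetric] by blast
    then show "normal_form x y \<otimes> w = w \<otimes> normal_form x y" using commutes by (cases p) simp
  qed simp
qed

text \<open>
  The class of a non-central element in the non-commuting graph; central elements also get
  class \<open>0\<close>, but \<open>nc_part\<close> is only used on \<open>nc_vertices G\<close>.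
\<close>

definition nc_part :: "'a \<Rightarrow> nat" where
  "nc_part g = (case the_inv_into exponents (case_prod normal_form) g of (x, y) \<Rightarrow> if even y then 0 else Suc x)"

lemma nc_part_normal_form: "(x, y) \<in> exponents \<Longrightarrow> nc_part (normal_form x y) = (if even y then 0 else Suc x)"
  using the_inv_into_f_f[OF inj_on_normal_form, of "(x, y)"] by (simp add: nc_part_def)

lemma nc_vertices_eq: "nc_vertices G = case_prod normal_form ` {(x, y) \<in> exponents. x \<noteq> 0 \<or> odd y}"
proof -
  have "nc_vertices G = case_prod normal_form ` exponents - grp_centre G"
    by (simp add: nc_vertices_def normal_form_image)
  also have "\<dots> = case_prod normal_form ` {(x, y) \<in> exponents. x \<noteq> 0 \<or> odd y}"
    using normal_form_in_centre_iff by auto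
  finally show ?thesis .
qed

lemma commute_iff_nc_part_eq:
  assumes "u \<in> nc_vertices G" and "v \<in> nc_vertices G"
  shows "u \<otimes> v = v \<otimes> u \<longleftrightarrow> nc_part u = nc_part v"
proof -
  obtain x y x' y' where u: "u = normal_form x y" "(x, y) \<in> exponents" "x \<noteq> 0 \<or> odd y"
    and v: "v = normal_form x' y'" "(x', y') \<in> exponents" "x' \<noteq> 0 \<or> odd y'"
    using assms unfolding nc_vertices_eq by auto
  then show ?thesis
    using normal_form_commute_iff_cases[of x x' y y'] by (auto simp: nc_part_normal_form)
qed

lemma nc_adj_iff: "nc_adj G u v \<longleftrightarrow> u \<in> nc_vertices G \<and> v \<in> nc_vertices G \<and> nc_part u \<noteq> nc_part v"
  using commute_iff_nc_part_eq by (auto simp: nc_adj_def)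

lemma card_even_below_double: "card {y. y < 2 * n \<and> even y} = n"
proof -
  have "{y. y < 2 * n \<and> even y} = (\<lambda>i. 2 * i) ` {..<n}" by (auto elim!: evenE)
  then show ?thesis by (simp add: card_image inj_on_def)
qed

lemma card_odd_below_double: "card {y. y < 2 * n \<and> odd y} = n"
proof -
  have "{y. y < 2 * n \<and> odd y} = (\<lambda>i. 2 * i + 1) ` {..<n}" by (auto elim!: oddE)
  then show ?thesis by (simp add: card_image inj_on_def)
qed

lemma card_nc_part_zero: "card {v \<in> nc_vertices G. nc_part v = 0} = (m - 1) * n"
proof -
  have "{v \<in> nc_vertices G. nc_part v = 0} =
      case_prod normal_form ` {(x, y) \<in> exponents. (x \<noteq> 0 \<or> odd y) \<and> nc_part (normal_form x y) = 0}"
    unfolding nc_vertices_eq by auto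
  also have "{(x, y) \<in> exponents. (x \<noteq> 0 \<or> odd y) \<and> nc_part (normal_form x y) = 0} =
      {1..<m} \<times> {y. y < 2 * n \<and> even y}"
    by (auto simp: nc_part_normal_form split: if_splits)
  finally have "{v \<in> nc_vertices G. nc_part v = 0} = case_prod normal_form ` ({1..<m} \<times> {y. y < 2 * n \<and> even y})" .
  moreover have "inj_on (case_prod normal_form) ({1..<m} \<times> {y. y < 2 * n \<and> even y})"
    by (rule inj_on_subset[OF inj_on_normal_form]) auto
  ultimately show ?thesis by (simp add: card_image card_cartesian_product card_even_below_double)
qed

lemma card_nc_part_Suc:
  assumes "k < m"
  shows "card {v \<in> nc_vertices G. nc_part v = Suc k} = n"
proof -
  have "{v \<in> nc_vertices G. nc_part v = Suc k} =
      case_prod normal_form ` {(x, y) \<in> exponents. (x \<noteq> 0 \<or> odd y) \<and> nc_part (normal_form x y) = Suc k}"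
    unfolding nc_vertices_eq by auto
  also have "{(x, y) \<in> exponents. (x \<noteq> 0 \<or> odd y) \<and> nc_part (normal_form x y) = Suc k} =
      {k} \<times> {y. y < 2 * n \<and> odd y}"
    using assms by (auto simp: nc_part_normal_form split: if_splits)
  finally have "{v \<in> nc_vertices G. nc_part v = Suc k} = case_prod normal_form ` ({k} \<times> {y. y < 2 * n \<and> odd y})" .
  moreover have "inj_on (case_prod normal_form) ({k} \<times> {y. y < 2 * n \<and> odd y})"
    using assms by (intro inj_on_subset[OF inj_on_normal_form]) auto
  ultimately show ?thesis by (simp add: card_image card_cartesian_product card_odd_below_double)
qed

lemma nc_part_image: "nc_part ` nc_vertices G = {0..<Suc m}"
proof (intro equalityI subsetI)
  fix k assume "k \<in> nc_part ` nc_vertices G"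
  then obtain x y where "(x, y) \<in> exponents" and "k = nc_part (normal_form x y)"
    unfolding nc_vertices_eq by auto
  then show "k \<in> {0..<Suc m}" by (simp add: nc_part_normal_form)
next
  fix k assume "k \<in> {0..<Suc m}"
  then have "card {v \<in> nc_vertices G. nc_part v = k} \<noteq> 0"
    using card_nc_part_zero card_nc_part_Suc[of "k - 1"] m_gt_2 n_pos by (cases k) simp_all
  then obtain v where "v \<in> nc_vertices G" and "nc_part v = k"
    by (metis (mono_tags, lifting) card.empty empty_Collect_eq)
  then show "k \<in> nc_part ` nc_vertices G" by blast
qed

lemma card_nc_vertices: "card (nc_vertices G) = 2 * m * n - n"
proof -
  let ?P = "{(x, y) \<in> exponents. x \<noteq> 0 \<or> odd y}"
  have "?P = exponents - {0} \<times> {y. y < 2 * n \<and> even y}" by auto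
  moreover have "{0} \<times> {y. y < 2 * n \<and> even y} \<subseteq> exponents" using m_gt_2 by auto
  ultimately have "card ?P = 2 * m * n - n"
    by (simp add: card_Diff_subset card_cartesian_product card_even_below_double)
  moreover have "inj_on (case_prod normal_form) ?P"
    by (rule inj_on_subset[OF inj_on_normal_form]) auto
  ultimately show ?thesis unfolding nc_vertices_eq by (simp add: card_image)
qed

lemma nc_part_other: "\<exists>w \<in> nc_vertices G. nc_part w \<noteq> nc_part u"
proof -
  have "(if nc_part u = 0 then 1 else 0) \<in> nc_part ` nc_vertices G" using nc_part_image m_gt_2 by simp
  then obtain w where "w \<in> nc_vertices G" and "nc_part w = (if nc_part u = 0 then 1 else 0)"
    by (metis imageE)
  then show ?thesis by (intro bexI[of _ w]) auto
qed

lemma char_poly_nc_distance_matrix: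
  assumes f: "bij_betw f {0..<card (nc_vertices G)} (nc_vertices G)"
  shows "char_poly (nc_distance_matrix G f) =
    char_poly (multipartite_quotient_mat (Suc m) (\<lambda>k. if k = 0 then real ((m - 1) * n) else real n))
    * [:2, 1:] ^ (2 * m * n - (m + n) - 1)"
proof -
  define N where "N = card (nc_vertices G)"
  define part where "part = nc_part \<circ> f"
  have "nc_distance_matrix G f = multipartite_distance_mat N part"
    unfolding N_def part_def
    using nc_dist_multipartite[OF nc_adj_iff nc_part_other] f by (rule nc_distance_matrix_multipartite)
  moreover have "part ` {0..<N} = {0..<Suc m}"
    using f nc_part_image unfolding part_def N_def bij_betw_def by (metis image_comp)
  ultimately have "char_poly (nc_distance_matrix G f) =
      char_poly (multipartite_quotient_mat (Suc m) (\<lambda>k. real (card {i. i < N \<and> part i = k}))) * [:2, 1:] ^ (N - Suc m)"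
    by (simp add: char_poly_multipartite_distance_mat)
  also have "multipartite_quotient_mat (Suc m) (\<lambda>k. real (card {i. i < N \<and> part i = k})) =
      multipartite_quotient_mat (Suc m) (\<lambda>k. if k = 0 then real ((m - 1) * n) else real n)"
  proof (rule multipartite_quotient_mat_cong)
    fix k assume "k < Suc m"
    then show "real (card {i. i < N \<and> part i = k}) = (if k = 0 then real ((m - 1) * n) else real n)"
      using card_Collect_bij_betw[OF f, of "\<lambda>v. nc_part v = k"] card_nc_part_zero card_nc_part_Suc[of "k - 1"]
      by (cases k) (simp_all add: part_def N_def)
  qed
  also have "N - Suc m = 2 * m * n - (m + n) - 1" using card_nc_vertices by (simp add: N_def)
  finally show ?thesis .
qed

end

theorem theorem6p1:
  fixes G :: "('a, 'b) monoid_scheme" and a b :: 'a and m n :: nat and f :: "nat \<Rightarrow> 'a"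
  assumes "group G"
    and "odd m" and "m > 2" and "n \<ge> 1"
    and "a \<in> carrier G" and "b \<in> carrier G"
    and "generate G {a, b} = carrier G"
    and "a [^]\<^bsub>G\<^esub> m = \<one>\<^bsub>G\<^esub>"
    and "b [^]\<^bsub>G\<^esub> (2 * n) = \<one>\<^bsub>G\<^esub>"
    and "b \<otimes>\<^bsub>G\<^esub> a \<otimes>\<^bsub>G\<^esub> inv\<^bsub>G\<^esub> b = inv\<^bsub>G\<^esub> a"
    and "card (carrier G) = 2 * m * n"
    and "bij_betw f {0..<card (nc_vertices G)} (nc_vertices G)"
  shows "char_poly (nc_distance_matrix G f) =
      [:2, 1:] ^ (2 * m * n - (m + n) - 1)
    * [:- (real n - 2), 1:] ^ (m - 1)
    * [:- ((- (4 + real n - 3 * real m * real n) + real n * sqrt (5 * (real m)\<^sup>2 - 10 * real m + 9)) / 2), 1:]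
    * [:- ((- (4 + real n - 3 * real m * real n) - real n * sqrt (5 * (real m)\<^sup>2 - 10 * real m + 9)) / 2), 1:]"
proof -
  interpret metacyclic_group G a b m n
    using assms(1-11) by (simp add: metacyclic_group_def metacyclic_group_axioms_def)
  have "m \<ge> 1" using m_gt_2 by simp
  show ?thesis
    unfolding char_poly_nc_distance_matrix[OF assms(12)] char_poly_metacyclic_quotient_mat[OF \<open>m \<ge> 1\<close>]
    by (simp only: mult_ac)
qed

end
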